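(* Let $T$ be an interval exchange transformation over the ordered alphabet $\mathcal{A}=\{a_1<\dots<a_k\}$ whose permutation is the symmetric permutation $\pi(a_i)=a_{k-i+1}$. Then every return word in the language of $T$ is perfectly clustering; i.e., for every $w\in\mathcal{L}(T)$ and every $u\in\mathcal{R}(w)$, $\mathrm{bwt}_{\mathcal{A}}(u)=a_k^{|u|_{a_k}}a_{k-1}^{|u|_{a_{k-1}}}\cdots a_1^{|u|_{a_1}}$.
   Context: A $k$-IET $T$ on $I=[\ell,r)$ over $\mathcal{A}$ is given by a partition of $I$ into left-closed right-open intervals $(I_a)_{a\in\mathcal{A}}$ of positive length ordered left to right by the order of $\mathcal{A}$ and a permutation $\pi$ of $\mathcal{A}$; $T(x)=x+\tau_a$ on $I_a$ with $\tau_a=\sum_{b:\,\pi^{-1}(b)<\pi^{-1}(a)}|I_b|-\sum_{b<a}|I_b|$. No minimality or regularity is assumed. Trajectories $\Omega_T(x)=w_0w_1\cdots$ with $w_i=a$ iff $T^i(x)\in I_a$; $\mathcal{L}(T)$ is the set of finite factors of all trajectories. Return words: $\mathcal{R}(w)=\{u\in\mathcal{A}^*: uw\in(\mathcal{L}(T)\cap w\mathcal{A}^* )\setminus\mathcal{A}^+w\mathcal{A}^+\}$. For a word $v$ of length $n$, $\mathrm{bwt}_{\mathcal{A}}(v)$ is the word of last letters of the $n$ cyclic rotations of $v$ sorted lexicographically w.r.t. the order of $\mathcal{A}$. A word is perfectly clustering if it is $\pi$-clustering for the symmetric permutation, i.e. its Burrows–Wheeler transform has the displayed form. *)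

theory Defs
  imports Complex_Main "HOL-Library.List_Lexorder"
begin

text \<open>Alphabet A = {0 < 1 < ... < k-1} (letter a_i of the paper is i-1).
 An IET is given by k, left endpoint l, lengths len (positive on letters),
 and a permutation p of {..<k}.\<close>

definition iet_ok :: "nat \<Rightarrow> (nat \<Rightarrow> real) \<Rightarrow> (nat \<Rightarrow> nat) \<Rightarrow> bool" where
  "iet_ok k len p \<longleftrightarrow> (\<forall>a<k. len a > 0) \<and> bij_betw p {..<k} {..<k}"

definition iet_right :: "nat \<Rightarrow> real \<Rightarrow> (nat \<Rightarrow> real) \<Rightarrow> real" where
  "iet_right k l len = l + (\<Sum>b<k. len b)"

definition iet_subint :: "real \<Rightarrow> (nat \<Rightarrow> real) \<Rightarrow> nat \<Rightarrow> real set" where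
  "iet_subint l len a = {l + (\<Sum>b<a. len b) ..< l + (\<Sum>b<Suc a. len b)}"

definition iet_tau :: "nat \<Rightarrow> (nat \<Rightarrow> real) \<Rightarrow> (nat \<Rightarrow> nat) \<Rightarrow> nat \<Rightarrow> real" where
  "iet_tau k len p a =
     (\<Sum>b\<in>{b. b < k \<and> inv_into {..<k} p b < inv_into {..<k} p a}. len b)
     - (\<Sum>b<a. len b)"

definition iet_letter :: "nat \<Rightarrow> real \<Rightarrow> (nat \<Rightarrow> real) \<Rightarrow> real \<Rightarrow> nat" where
  "iet_letter k l len x = (THE a. a < k \<and> x \<in> iet_subint l len a)"

definition iet_map :: "nat \<Rightarrow> real \<Rightarrow> (nat \<Rightarrow> real) \<Rightarrow> (nat \<Rightarrow> nat) \<Rightarrow> real \<Rightarrow> real" where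
  "iet_map k l len p x = x + iet_tau k len p (iet_letter k l len x)"

definition iet_traj :: "nat \<Rightarrow> real \<Rightarrow> (nat \<Rightarrow> real) \<Rightarrow> (nat \<Rightarrow> nat) \<Rightarrow> real \<Rightarrow> nat \<Rightarrow> nat" where
  "iet_traj k l len p x n = iet_letter k l len ((iet_map k l len p ^^ n) x)"

definition iet_lang :: "nat \<Rightarrow> real \<Rightarrow> (nat \<Rightarrow> real) \<Rightarrow> (nat \<Rightarrow> nat) \<Rightarrow> nat list set" where
  "iet_lang k l len p = {w. \<exists>x\<in>{l..<iet_right k l len}. \<exists>i.
      w = map (iet_traj k l len p x) [i..<i + length w]}"

definition return_words :: "nat \<Rightarrow> real \<Rightarrow> (nat \<Rightarrow> real) \<Rightarrow> (nat \<Rightarrow> nat) \<Rightarrow> nat list \<Rightarrow> nat list set" where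
  "return_words k l len p w = {u. set u \<subseteq> {..<k} \<and>
      u @ w \<in> iet_lang k l len p \<and>
      (\<exists>y. set y \<subseteq> {..<k} \<and> u @ w = w @ y) \<and>
      \<not> (\<exists>x y. x \<noteq> [] \<and> y \<noteq> [] \<and> set x \<subseteq> {..<k} \<and> set y \<subseteq> {..<k} \<and> u @ w = x @ w @ y)}"

definition bwt :: "nat list \<Rightarrow> nat list" where
  "bwt v = map last (sort (map (\<lambda>i. rotate i v) [0..<length v]))"

definition clustered_form :: "nat \<Rightarrow> nat list \<Rightarrow> nat list" where
  "clustered_form k v = concat (map (\<lambda>j. replicate (count_list v (k - 1 - j)) (k - 1 - j)) [0..<k])"

end

theory Submission
  imports Defs "HOL-Library.Multiset"
begin

text \<open>For the symmetric permutation, \<open>T\<close> sends \<open>I\<^sub>a\<close> to the \<open>a\<close>-th interval counted from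
  the right, so it reverses the order of points carrying different letters; and since \<open>T\<close> is a
  translation on each \<open>I\<^sub>a\<close>, a point with lexicographically smaller trajectory lies to the left.
  Read \<open>uw\<close> along the orbit of \<open>x\<close> and compare the rotations of \<open>u\<close> starting after
  positions \<open>a\<close> and \<open>b\<close>. As \<open>w\<close> does not occur strictly inside \<open>uw\<close>, two such rotations
  already differ within \<open>uw\<close>; hence a smaller rotation comes from a point \<open>T\<^bsup>a+1\<^esup> x\<close> left
  of \<open>T\<^bsup>b+1\<^esup> x\<close>, and order reversal gives \<open>u\<^sub>b \<le> u\<^sub>a\<close>. So the last letters of the
  sorted rotations decrease, i.e. \<open>bwt u\<close> is \<open>u\<close> sorted decreasingly.\<close>

lemma list_less_first_difference:
  fixes xs ys :: "'a::ord list"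
  assumes "length xs = length ys" "xs < ys"
  obtains m where "m < length xs" "\<And>t. t < m \<Longrightarrow> xs ! t = ys ! t" "xs ! m < ys ! m"
proof -
  obtain i where "i < length xs" "take i xs = take i ys" "xs ! i < ys ! i"
    using assms unfolding list_less_def lexord_take_index_conv by auto
  then show thesis using that by (metis nth_take)
qed

lemma last_rotate_Suc:
  assumes "a < length xs"
  shows "last (rotate (Suc a) xs) = xs ! a"
proof -
  have "last (rotate (Suc a) xs) = rotate (Suc a) xs ! (length xs - 1)"
    using assms by (metis last_conv_nth length_rotate list.size(3) not_less0)
  also have "\<dots> = xs ! ((Suc a + (length xs - 1)) mod length xs)"
    using assms by (intro nth_rotate) simp
  also have "(Suc a + (length xs - 1)) mod length xs = a"
    using assms by (cases "length xs") (auto simp flip: add_Suc_right)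
  finally show ?thesis .
qed

lemma rotate_eq_rotate_Suc:
  assumes "xs \<noteq> []"
  obtains a where "a < length xs" "rotate i xs = rotate (Suc a) xs"
proof
  let ?n = "length xs"
  show "(i + ?n - 1) mod ?n < ?n"
    using assms by simp
  have "Suc ((i + ?n - 1) mod ?n) mod ?n = i mod ?n"
    using assms by (simp add: mod_Suc_eq)
  then show "rotate i xs = rotate (Suc ((i + ?n - 1) mod ?n)) xs"
    by (metis rotate_conv_mod)
qed

lemma overlap_nth_mod:
  assumes overlap: "u @ w = w @ y" and "u \<noteq> []" and "j < length (u @ w)"
  shows "(u @ w) ! j = u ! (j mod length u)"
  using assms(3)
proof (induction j rule: less_induct)
  case (less j)
  show ?case
  proof (cases "j < length u")
    case True
    then show ?thesis by (simp add: nth_append)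
  next
    case False
    have "0 < length u"
      using \<open>u \<noteq> []\<close> by simp
    then have shorter: "j - length u < j"
      using False by (intro diff_less) linarith+
    have j: "j - length u < length w"
      using False less.prems by simp
    from False have "(u @ w) ! j = w ! (j - length u)"
      by (simp add: nth_append)
    also have "\<dots> = (w @ y) ! (j - length u)"
      using j by (simp add: nth_append)
    also have "\<dots> = (u @ w) ! (j - length u)"
      by (simp only: overlap)
    also have "\<dots> = u ! ((j - length u) mod length u)"
      using less.IH[OF shorter] j \<open>u \<noteq> []\<close> by simp
    also have "\<dots> = u ! (j mod length u)"
      using False by (simp add: le_mod_geq)
    finally show ?thesis .
  qed
qed

lemma agreeing_shifts_fit_in_overlap:
  assumes overlap: "u @ w = w @ y" and "u \<noteq> []"
    and no_inner: "\<And>x z. u @ w = x @ w @ z \<Longrightarrow> x = [] \<or> z = []"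
    and "0 < a" "a < b" and b_le: "b \<le> length u"
    and agree: "\<And>t. t < m \<Longrightarrow> u ! ((a + t) mod length u) = u ! ((b + t) mod length u)"
  shows "b + m < length (u @ w)"
proof (rule ccontr)
  assume long: "\<not> b + m < length (u @ w)"
  \<comment> \<open>then \<open>w\<close> reoccurs at position \<open>q\<close>, strictly inside \<open>uw\<close>\<close>
  define n where "n = length u"
  define q where "q = a + (n - b)"
  have q: "0 < q" "q < n"
    using assms by (auto simp: q_def n_def)
  have per: "(u @ w) ! j = u ! (j mod n)" if "j < length (u @ w)" for j
    using overlap_nth_mod[OF overlap \<open>u \<noteq> []\<close> that] by (simp add: n_def)
  have "take (length w) (drop q (u @ w)) = w"
  proof (rule nth_equalityI)
    show "length (take (length w) (drop q (u @ w))) = length w"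
      using q by (simp add: n_def)
    fix t assume "t < length (take (length w) (drop q (u @ w)))"
    then have t: "t < length w" by simp
    have "take (length w) (drop q (u @ w)) ! t = (u @ w) ! (q + t)"
      using t q by (simp add: n_def del: drop_append take_append)
    also have "\<dots> = u ! ((a + (n - b + t)) mod n)"
      using t q per[of "q + t"] by (simp add: n_def q_def add.assoc)
    also have "\<dots> = u ! ((b + (n - b + t)) mod n)"
      using agree[of "n - b + t"] long t b_le by (simp add: n_def)
    also have "\<dots> = (u @ w) ! t"
      using per[of t] t b_le by (simp add: n_def)
    also have "\<dots> = w ! t"
      using overlap t by (simp add: nth_append)
    finally show "take (length w) (drop q (u @ w)) ! t = w ! t" .
  qed
  then have "u @ w = take q (u @ w) @ w @ drop (q + length w) (u @ w)"
    by (metis append_take_drop_id drop_drop add.commute)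
  moreover have "take q (u @ w) \<noteq> []" "drop (q + length w) (u @ w) \<noteq> []"
    using q by (auto simp: n_def)
  ultimately show False
    using no_inner by blast
qed

lemma mset_rotate: "mset (rotate n xs) = mset xs"
  by (metis append_take_drop_id mset_append rotate_drop_take union_commute)

lemma mset_bwt: "mset (bwt v) = mset v"
proof (cases "v = []")
  case True
  then show ?thesis by (simp add: bwt_def)
next
  case False
  let ?n = "length v"
  have "map last (map (\<lambda>i. rotate i v) [0..<?n]) = rotate (?n - 1) v"
  proof (rule nth_equalityI)
    fix i assume "i < length (map last (map (\<lambda>i. rotate i v) [0..<?n]))"
    then have i: "i < ?n" by simp
    have "last (rotate i v) = rotate i v ! (?n - 1)"
      using False by (simp add: last_conv_nth)
    also have "\<dots> = rotate (?n - 1) v ! i"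
      using False i by (simp add: nth_rotate add.commute)
    finally show "map last (map (\<lambda>i. rotate i v) [0..<?n]) ! i = rotate (?n - 1) v ! i"
      using i by simp
  qed simp
  then show ?thesis
    by (metis bwt_def mset_map mset_rotate mset_sort)
qed

lemma rev_bwt_eq_sort:
  assumes antitone: "\<And>i j. rotate i v < rotate j v \<Longrightarrow> last (rotate j v) \<le> last (rotate i v)"
  shows "rev (bwt v) = sort v"
proof -
  define L where "L = sort (map (\<lambda>i. rotate i v) [0..<length v])"
  have bwt: "bwt v = map last L"
    by (simp add: bwt_def L_def)
  have rotation: "\<exists>i'. L ! i = rotate i' v" if "i < length L" for i
    using nth_mem[OF that] by (auto simp: L_def)
  have "sorted (rev (bwt v))"
    unfolding sorted_rev_iff_nth_mono
  proof (intro allI impI)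
    fix i j assume "i \<le> j" "j < length (bwt v)"
    then have "L ! i \<le> L ! j" "i < length L" "j < length L"
      by (simp_all add: bwt L_def sorted_nth_mono)
    moreover obtain i' j' where "L ! i = rotate i' v" "L ! j = rotate j' v"
      using rotation \<open>i < length L\<close> \<open>j < length L\<close> by blast
    ultimately show "bwt v ! j \<le> bwt v ! i"
      using antitone[of i' j'] by (cases "L ! i = L ! j") (auto simp: bwt)
  qed
  then show ?thesis
    by (metis mset_bwt mset_rev properties_for_sort)
qed

definition counting_sort :: "nat \<Rightarrow> nat list \<Rightarrow> nat list" where
  "counting_sort m v = concat (map (\<lambda>c. replicate (count_list v c) c) [0..<m])"

lemma counting_sort_eq_sort:
  assumes "set v \<subseteq> {..<m}"
  shows "counting_sort m v = sort v"
proof -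
  have set_counting_sort: "set (counting_sort m' v) \<subseteq> {..<m'}" for m'
    by (induction m') (auto simp: counting_sort_def)
  have "sorted (counting_sort m' v)" for m'
  proof (induction m')
    case (Suc m')
    have "counting_sort (Suc m') v = counting_sort m' v @ replicate (count_list v m') m'"
      by (simp add: counting_sort_def)
    then show ?case
      using Suc set_counting_sort[of m'] by (auto simp: sorted_append)
  qed (simp add: counting_sort_def)
  moreover have "mset (counting_sort m v) = mset v"
  proof (rule multiset_eqI)
    fix c
    have "count (mset (counting_sort m' v)) c = (if c < m' then count_list v c else 0)" for m'
      by (induction m') (auto simp: counting_sort_def)
    moreover have "c \<ge> m \<Longrightarrow> count_list v c = 0"
      using assms by (auto intro: count_notin)
    ultimately show "count (mset (counting_sort m v)) c = count (mset v) c"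
      by (auto simp: count_mset)
  qed
  ultimately show ?thesis
    by (metis properties_for_sort)
qed

lemma clustered_form_eq_rev_sort:
  assumes "set v \<subseteq> {..<k}"
  shows "clustered_form k v = rev (sort v)"
proof -
  have "rev [0..<k] = map (\<lambda>j. k - 1 - j) [0..<k]"
    by (rule nth_equalityI) (auto simp: rev_nth)
  then have "clustered_form k v = concat (map (\<lambda>c. replicate (count_list v c) c) (rev [0..<k]))"
    by (simp add: clustered_form_def comp_def)
  then have "rev (clustered_form k v) = counting_sort k v"
    by (simp add: counting_sort_def rev_concat rev_map comp_def)
  then show ?thesis
    using counting_sort_eq_sort[OF assms] by (metis rev_rev_ident)
qed

locale iet =
  fixes k :: nat and l :: real and len :: "nat \<Rightarrow> real" and p :: "nat \<Rightarrow> nat"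
  assumes iet_ok: "iet_ok k len p"
begin

abbreviation "I \<equiv> {l..<iet_right k l len}"
abbreviation "T \<equiv> iet_map k l len p"
abbreviation "letter \<equiv> iet_letter k l len"
abbreviation "traj \<equiv> iet_traj k l len p"
abbreviation "S a \<equiv> \<Sum>b<a. len b"

lemma len_pos: "a < k \<Longrightarrow> 0 < len a"
  using iet_ok by (simp add: iet_ok_def)

lemma sum_len_mono: "a \<le> b \<Longrightarrow> b \<le> k \<Longrightarrow> S a \<le> S b"
  by (rule sum_mono2) (auto intro!: less_imp_le len_pos)

lemma subint_less:
  "z \<in> iet_subint l len a \<Longrightarrow> z' \<in> iet_subint l len b \<Longrightarrow> a < b \<Longrightarrow> b \<le> k \<Longrightarrow> z < z'"
  using sum_len_mono[of "Suc a" b] by (auto simp: iet_subint_def)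

lemma letter_in_subint:
  assumes "z \<in> I"
  shows "letter z < k" "z \<in> iet_subint l len (letter z)"
proof -
  define A where "A = {a. a < k \<and> l + S a \<le> z}"
  define a where "a = Max A"
  have "finite A"
    by (simp add: A_def)
  moreover have "0 \<in> A"
    using assms by (cases "k = 0") (auto simp: A_def iet_right_def)
  ultimately have a: "a \<in> A" "\<And>b. b \<in> A \<Longrightarrow> b \<le> a"
    unfolding a_def by (auto intro: Max_in Max_ge)
  have "z < l + S (Suc a)"
  proof (cases "Suc a < k")
    case True
    then show ?thesis
      using a(2)[of "Suc a"] by (force simp: A_def)
  next
    case False
    then have "Suc a = k"
      using a(1) by (simp add: A_def)
    then show ?thesis
      using assms by (simp add: iet_right_def)
  qed
  then have in_a: "a < k \<and> z \<in> iet_subint l len a"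
    using a(1) by (simp add: A_def iet_subint_def)
  moreover have "b = a" if "b < k \<and> z \<in> iet_subint l len b" for b
    using subint_less[of z b z a] subint_less[of z a z b] that in_a by (meson less_irrefl less_imp_le nat_neq_iff)
  ultimately have "letter z = a"
    unfolding iet_letter_def by (rule the_equality)
  then show "letter z < k" "z \<in> iet_subint l len (letter z)"
    using in_a by simp_all
qed

lemma map_mem: 
  assumes "z \<in> I"
  shows "T z \<in> I"
proof -
  define a where "a = letter z"
  define B where "B = {b. b < k \<and> inv_into {..<k} p b < inv_into {..<k} p a}"
  have a: "a < k" "l + S a \<le> z" "z < l + S a + len a"
    using letter_in_subint[OF assms] by (simp_all add: a_def iet_subint_def)
  have T: "T z = z + sum len B - S a"
    by (simp add: iet_map_def iet_tau_def a_def B_def)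
  have "0 \<le> sum len B"
    by (rule sum_nonneg) (auto simp: B_def intro: less_imp_le len_pos)
  moreover have "sum len B + len a = sum len (insert a B)"
    by (simp add: B_def)
  moreover have "sum len (insert a B) \<le> S k"
    using a(1) by (intro sum_mono2) (auto simp: B_def intro: less_imp_le len_pos)
  ultimately show ?thesis
    using a T by (simp add: iet_right_def)
qed

lemma funpow_mem: "z \<in> I \<Longrightarrow> (T ^^ n) z \<in> I"
  by (induction n) (auto intro!: map_mem simp del: atLeastLessThan_iff)

lemma traj_funpow: "traj ((T ^^ a) x) t = traj x (t + a)"
  by (simp add: iet_traj_def funpow_add)

lemma traj_less: "x \<in> I \<Longrightarrow> traj x j < k"
  unfolding iet_traj_def by (intro letter_in_subint(1) funpow_mem)

lemma lang_imp_traj: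
  assumes "v \<in> iet_lang k l len p"
  obtains x where "x \<in> I" "\<And>j. j < length v \<Longrightarrow> traj x j = v ! j"
proof -
  obtain x0 i where "x0 \<in> I" and v: "v = map (traj x0) [i..<i + length v]"
    using assms unfolding iet_lang_def by blast
  show thesis
  proof
    show "(T ^^ i) x0 \<in> I"
      using \<open>x0 \<in> I\<close> by (rule funpow_mem)
    show "traj ((T ^^ i) x0) j = v ! j" if "j < length v" for j
      using that by (subst v) (simp add: traj_funpow add.commute)
  qed
qed

lemma funpow_diff_eq:
  assumes "\<And>j. j < m \<Longrightarrow> traj x j = traj x' j"
  shows "(T ^^ m) x - (T ^^ m) x' = x - x'"
  using assms
proof (induction m)
  case (Suc m)
  have translation: "T y - T y' = y - y'" if "letter y = letter y'" for y y'
    using that by (simp add: iet_map_def)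
  have "letter ((T ^^ m) x) = letter ((T ^^ m) x')"
    using Suc.prems by (simp add: iet_traj_def)
  then show ?case
    using Suc translation by simp
qed simp

lemma less_if_traj_less:
  assumes "x \<in> I" "x' \<in> I"
    and "\<And>j. j < m \<Longrightarrow> traj x j = traj x' j" "traj x m < traj x' m"
  shows "x < x'"
proof -
  have "(T ^^ m) x < (T ^^ m) x'"
    using subint_less letter_in_subint funpow_mem assms unfolding iet_traj_def
    by (meson less_imp_le)
  moreover have "(T ^^ m) x - (T ^^ m) x' = x - x'"
    by (rule funpow_diff_eq) (rule assms(3))
  ultimately show ?thesis
    by simp
qed

end

locale symmetric_iet = iet +
  assumes symmetric: "\<forall>i<k. p i = k - 1 - i"
begin

lemma inv_into_p: "b < k \<Longrightarrow> inv_into {..<k} p b = k - 1 - b"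
proof -
  assume "b < k"
  moreover have "inj_on p {..<k}"
    using iet_ok by (simp add: iet_ok_def bij_betw_def)
  moreover have "p (k - 1 - b) = b"
    using symmetric \<open>b < k\<close> by auto
  ultimately show ?thesis
    by (intro inv_into_f_eq) auto
qed

lemma tau_symmetric: "a < k \<Longrightarrow> iet_tau k len p a = S k - S (Suc a) - S a"
proof -
  assume "a < k"
  then have "{b. b < k \<and> inv_into {..<k} p b < inv_into {..<k} p a} = {Suc a..<k}"
    by (auto simp: inv_into_p)
  moreover have "sum len {Suc a..<k} = S k - S (Suc a)"
    using sum.atLeastLessThan_concat[of 0 "Suc a" k len] \<open>a < k\<close> by (simp add: atLeast0LessThan)
  ultimately show ?thesis
    by (simp add: iet_tau_def)
qed

lemma map_bounds:
  assumes "z \<in> I"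
  shows "l + S k - S (Suc (letter z)) \<le> T z" "T z < l + S k - S (letter z)"
  using letter_in_subint[OF assms] by (auto simp: iet_map_def tau_symmetric iet_subint_def)

lemma letter_antitone:
  assumes "z \<in> I" "z' \<in> I" "T z < T z'"
  shows "letter z' \<le> letter z"
proof (rule ccontr)
  assume "\<not> letter z' \<le> letter z"
  then have "S (Suc (letter z)) \<le> S (letter z')"
    using letter_in_subint(1)[OF assms(2)] by (intro sum_len_mono) auto
  then show False
    using map_bounds[OF assms(1)] map_bounds[OF assms(2)] assms(3) by linarith
qed

lemma traj_antitone:
  assumes "x \<in> I"
    and "\<And>t. t < m \<Longrightarrow> traj x (Suc a + t) = traj x (Suc b + t)"
    and "traj x (Suc a + m) < traj x (Suc b + m)"
  shows "traj x b \<le> traj x a"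
proof -
  have "(T ^^ Suc a) x < (T ^^ Suc b) x"
  proof (rule less_if_traj_less)
    show "(T ^^ Suc a) x \<in> I" "(T ^^ Suc b) x \<in> I"
      using assms(1) by (rule funpow_mem)+
  qed (use assms(2,3) in \<open>simp_all only: traj_funpow add.commute\<close>)
  then have "T ((T ^^ a) x) < T ((T ^^ b) x)"
    by simp
  then show ?thesis
    using letter_antitone funpow_mem assms(1) by (simp add: iet_traj_def)
qed

lemma return_word_last_rotate_antitone:
  assumes "x \<in> I" and traj: "\<And>j. j < length (u @ w) \<Longrightarrow> traj x j = (u @ w) ! j"
    and overlap: "u @ w = w @ y" and "u \<noteq> []"
    and no_inner: "\<And>x z. u @ w = x @ w @ z \<Longrightarrow> x = [] \<or> z = []"
    and less: "rotate i u < rotate j u"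
  shows "last (rotate j u) \<le> last (rotate i u)"
proof -
  define n where "n = length u"
  have per: "traj x j = u ! (j mod n)" if "j < length (u @ w)" for j
    using traj overlap_nth_mod[OF overlap \<open>u \<noteq> []\<close>] that by (simp add: n_def)
  have rotate_nth: "rotate c u ! t = u ! ((c + t) mod n)" if "t < n" for c t
    using that by (simp add: nth_rotate n_def)
  obtain a b where ab: "a < n" "b < n"
    and rot: "rotate i u = rotate (Suc a) u" "rotate j u = rotate (Suc b) u"
    using rotate_eq_rotate_Suc[OF \<open>u \<noteq> []\<close>] unfolding n_def by metis
  obtain m where "m < n"
    and "\<And>t. t < m \<Longrightarrow> rotate (Suc a) u ! t = rotate (Suc b) u ! t"
    and "rotate (Suc a) u ! m < rotate (Suc b) u ! m"
    using list_less_first_difference[of "rotate (Suc a) u" "rotate (Suc b) u"] less rot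
    by (auto simp: n_def simp del: rotate_Suc)
  then have agree: "\<And>t. t < m \<Longrightarrow> u ! ((Suc a + t) mod n) = u ! ((Suc b + t) mod n)"
    and differ: "u ! ((Suc a + m) mod n) < u ! ((Suc b + m) mod n)"
    by (simp_all add: rotate_nth del: rotate_Suc)
  have fit: "Suc (max a b) + m < length (u @ w)"
  proof (cases "a < b")
    case True
    then show ?thesis
      using agreeing_shifts_fit_in_overlap[OF overlap \<open>u \<noteq> []\<close> no_inner, of "Suc a" "Suc b" m]
        agree ab by (simp add: n_def max_def)
  next
    case False
    moreover have "a \<noteq> b"
      using differ by auto
    ultimately show ?thesis
      using agreeing_shifts_fit_in_overlap[OF overlap \<open>u \<noteq> []\<close> no_inner, of "Suc b" "Suc a" m]
        agree[symmetric] ab by (simp add: n_def max_def)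
  qed
  have "traj x b \<le> traj x a"
  proof (rule traj_antitone[OF \<open>x \<in> I\<close>])
    show "traj x (Suc a + t) = traj x (Suc b + t)" if "t < m" for t
      using per agree that fit by simp
    show "traj x (Suc a + m) < traj x (Suc b + m)"
      using per differ fit by simp
  qed
  moreover have "traj x a = u ! a" "traj x b = u ! b"
    using per ab by (simp_all add: n_def)
  moreover have "last (rotate i u) = u ! a" "last (rotate j u) = u ! b"
    using rot last_rotate_Suc ab by (simp_all add: n_def del: rotate_Suc)
  ultimately show ?thesis
    by simp
qed

lemma return_word_bwt:
  assumes "u \<in> return_words k l len p w"
  shows "rev (bwt u) = sort u"
proof (cases "u = []")
  case True
  then show ?thesis
    by (simp add: bwt_def)
next
  case False
  obtain y where overlap: "u @ w = w @ y" and "u @ w \<in> iet_lang k l len p"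
    and no_inner_k: "\<not> (\<exists>x z. x \<noteq> [] \<and> z \<noteq> [] \<and> set x \<subseteq> {..<k} \<and> set z \<subseteq> {..<k}
      \<and> u @ w = x @ w @ z)"
    using assms by (auto simp: return_words_def)
  then obtain x where "x \<in> I" and traj: "\<And>j. j < length (u @ w) \<Longrightarrow> traj x j = (u @ w) ! j"
    using lang_imp_traj by blast
  have "set (u @ w) \<subseteq> {..<k}"
  proof
    fix c assume "c \<in> set (u @ w)"
    then obtain j where "j < length (u @ w)" "c = (u @ w) ! j"
      by (metis in_set_conv_nth)
    then show "c \<in> {..<k}"
      using traj[of j] traj_less[OF \<open>x \<in> I\<close>, of j] by simp
  qed
  then have no_inner: "x' = [] \<or> z = []" if "u @ w = x' @ w @ z" for x' z
    using no_inner_k that by (metis le_sup_iff set_append)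
  show ?thesis
    by (rule rev_bwt_eq_sort)
      (rule return_word_last_rotate_antitone[OF \<open>x \<in> I\<close> traj overlap False no_inner])
qed

end

theorem corollary6p7:
  fixes k :: nat and l :: real and len :: "nat \<Rightarrow> real" and p :: "nat \<Rightarrow> nat"
  assumes "iet_ok k len p"
    and "\<forall>i<k. p i = k - 1 - i"
  shows "\<forall>w\<in>iet_lang k l len p. \<forall>u\<in>return_words k l len p w.
           bwt u = clustered_form k u"
proof (intro ballI)
  fix w u
  assume u: "u \<in> return_words k l len p w"
  interpret symmetric_iet k l len p
    using assms by unfold_locales
  have "clustered_form k u = rev (sort u)"
    using u by (intro clustered_form_eq_rev_sort) (simp add: return_words_def)
  also have "sort u = rev (bwt u)"
    using return_word_bwt[OF u] by simp
  finally show "bwt u = clustered_form k u"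
    by simp
qed

end
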